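(* Let $f(X)=a_kX^k+\cdots+a_0\in\mathbb{Z}[X]$ be a nonconstant polynomial of degree $k\ge1$ with roots $\alpha_1,\dots,\alpha_k$ (with multiplicity) in an algebraic closure of $\mathbb{Q}$, and define $$\widetilde{f}(X):=a_k^{2k-2}\prod_{\substack{1\leq i,j\leq k\\ i\neq j}}\bigl(X-(\alpha_i-\alpha_j)\bigr).$$ Then $f$ and $\widetilde{f}$ have the same Galois group over $\mathbb{Q}$. *)

theory Defs
  imports "HOL-Algebra.Group" "HOL-Computational_Algebra.Polynomial"
begin

text \<open>We work inside the complex numbers, which contain an algebraic closure of Q.\<close>

definition is_subfield_C :: "complex set \<Rightarrow> bool" where
  "is_subfield_C K \<longleftrightarrow> 0 \<in> K \<and> 1 \<in> K \<and>
     (\<forall>x\<in>K. \<forall>y\<in>K. x + y \<in> K \<and> x * y \<in> K) \<and>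
     (\<forall>x\<in>K. - x \<in> K \<and> inverse x \<in> K)"

definition splitting_field_C :: "complex poly \<Rightarrow> complex set" where
  "splitting_field_C p = \<Inter>{K. is_subfield_C K \<and> {z. poly p z = 0} \<subseteq> K}"

text \<open>Galois group over Q of p: the field automorphisms of its splitting field K
  fixing Q pointwise (extended by the identity outside K, so that they are
  uniquely represented as functions on C), under composition.\<close>

definition galois_group_C :: "complex poly \<Rightarrow> (complex \<Rightarrow> complex) monoid" where
  "galois_group_C p =
     (let K = splitting_field_C p in
      \<lparr> carrier = {\<sigma>. bij_betw \<sigma> K K
                     \<and> (\<forall>x\<in>K. \<forall>y\<in>K. \<sigma> (x + y) = \<sigma> x + \<sigma> y \<and> \<sigma> (x * y) = \<sigma> x * \<sigma> y)
                     \<and> (\<forall>q\<in>\<rat>. \<sigma> q = q)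
                     \<and> (\<forall>x. x \<notin> K \<longrightarrow> \<sigma> x = x)},
        monoid.mult = (\<lambda>\<sigma> \<tau>. \<sigma> \<circ> \<tau>),
        monoid.one = id \<rparr>)"

end

theory Submission
  imports Defs
begin

text \<open>Every field containing the \<open>\<alpha>\<^sub>i\<close> contains their
  differences; conversely, \<open>\<Sum>\<^sub>j (\<alpha>\<^sub>i - \<alpha>\<^sub>j) = k \<alpha>\<^sub>i - \<Sum>\<^sub>j \<alpha>\<^sub>j\<close>, and
  \<open>\<Sum>\<^sub>j \<alpha>\<^sub>j = - a\<^sub>k\<^sub>-\<^sub>1 / a\<^sub>k\<close> is rational by Vieta, so every field containing the
  differences contains the \<open>\<alpha>\<^sub>i\<close>. Hence both polynomials have the same splitting field
  and thus literally the same Galois group.\<close>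

lemma coeff_linear_factor_mult:
  "coeff ([:-a, 1:] * p) n = (if n = 0 then 0 else coeff p (n - 1)) - a * coeff p n"
  for p :: "'a::comm_ring_1 poly"
  by (cases n) (simp_all add: coeff_pCons)

lemma degree_prod_linear_factors_le:
  "degree (\<Prod>a\<leftarrow>xs. [:-a, 1:]) \<le> length xs"
  for xs :: "'a::comm_ring_1 list"
  using degree_prod_list_le[of "map (\<lambda>a. [:-a, 1:]) xs"]
  by (simp add: comp_def sum_list_triv)

lemma coeff_prod_linear_factors_length:
  "coeff (\<Prod>a\<leftarrow>xs. [:-a, 1:]) (length xs) = 1"
  for xs :: "'a::comm_ring_1 list"
proof (induction xs)
  case (Cons a xs)
  have "coeff (\<Prod>a\<leftarrow>xs. [:-a, 1:]) (Suc (length xs)) = 0"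
    using degree_prod_linear_factors_le[of xs] by (simp add: coeff_eq_0)
  with Cons.IH show ?case by (simp add: coeff_linear_factor_mult)
qed simp

lemma coeff_prod_linear_factors_pred_length:
  "xs \<noteq> [] \<Longrightarrow> coeff (\<Prod>a\<leftarrow>xs. [:-a, 1:]) (length xs - 1) = - sum_list xs"
  for xs :: "'a::comm_ring_1 list"
proof (induction xs)
  case (Cons a xs)
  show ?case
  proof (cases "xs = []")
    case False
    then have "coeff (\<Prod>a\<leftarrow>xs. [:-a, 1:]) (length xs - 1) = - sum_list xs"
      by (rule Cons.IH)
    with False show ?thesis
      unfolding list.map prod_list.Cons coeff_linear_factor_mult
      by (simp add: coeff_prod_linear_factors_length)
  qed simp
qed simp

lemma sum_list_roots_Rats:
  fixes f :: "int poly" and \<alpha> :: "complex list"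
  assumes f: "map_poly of_int f = smult (of_int (lead_coeff f)) (\<Prod>a\<leftarrow>\<alpha>. [:-a, 1:])"
    and "\<alpha> \<noteq> []" and lc: "(of_int (lead_coeff f) :: complex) \<noteq> 0"
  shows "sum_list \<alpha> \<in> \<rat>"
proof -
  have "of_int (coeff f (length \<alpha> - 1)) = of_int (lead_coeff f) * - sum_list \<alpha>"
    using arg_cong[OF f, of "\<lambda>p. coeff p (length \<alpha> - 1)"]
      coeff_prod_linear_factors_pred_length[OF \<open>\<alpha> \<noteq> []\<close>]
    by (simp add: coeff_map_poly)
  then have "sum_list \<alpha> = - of_int (coeff f (length \<alpha> - 1)) / of_int (lead_coeff f)"
    using lc by (simp add: field_simps)
  then show ?thesis
    by simp
qed

lemma is_subfield_C_of_nat: "is_subfield_C K \<Longrightarrow> of_nat n \<in> K"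
  by (induction n) (auto simp: is_subfield_C_def)

lemma is_subfield_C_of_int: "is_subfield_C K \<Longrightarrow> of_int m \<in> K"
  by (cases m rule: int_cases2) (auto simp: is_subfield_C_def is_subfield_C_of_nat)

lemma Rats_subset_subfield_C: "is_subfield_C K \<Longrightarrow> \<rat> \<subseteq> K"
  by (auto elim!: Rats_cases' simp: divide_inverse is_subfield_C_def is_subfield_C_of_int)

lemma is_subfield_C_add: "is_subfield_C K \<Longrightarrow> x \<in> K \<Longrightarrow> y \<in> K \<Longrightarrow> x + y \<in> K"
  and is_subfield_C_mult: "is_subfield_C K \<Longrightarrow> x \<in> K \<Longrightarrow> y \<in> K \<Longrightarrow> x * y \<in> K"
  by (simp_all add: is_subfield_C_def)

lemma is_subfield_C_diff: "is_subfield_C K \<Longrightarrow> x \<in> K \<Longrightarrow> y \<in> K \<Longrightarrow> x - y \<in> K"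
  unfolding is_subfield_C_def by (metis diff_conv_add_uminus)

lemma is_subfield_C_sum:
  "is_subfield_C K \<Longrightarrow> (\<And>i. i \<in> A \<Longrightarrow> g i \<in> K) \<Longrightarrow> sum g A \<in> K"
  by (induction A rule: infinite_finite_induct) (auto simp: is_subfield_C_def)

lemma galois_group_C_eqI:
  assumes "\<And>K. is_subfield_C K \<Longrightarrow> {z. poly p z = 0} \<subseteq> K \<longleftrightarrow> {z. poly q z = 0} \<subseteq> K"
  shows "galois_group_C p = galois_group_C q"
proof -
  have "splitting_field_C p = splitting_field_C q"
    unfolding splitting_field_C_def using assms by metis
  then show ?thesis
    unfolding galois_group_C_def by simp
qed

lemma subfield_C_contains_list_iff_differences:
  fixes \<alpha> :: "complex list"
  assumes K: "is_subfield_C K" and "\<alpha> \<noteq> []" and sum_Rats: "sum_list \<alpha> \<in> \<rat>"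
  shows "set \<alpha> \<subseteq> K \<longleftrightarrow>
    {\<alpha> ! i - \<alpha> ! j |i j. i < length \<alpha> \<and> j < length \<alpha> \<and> i \<noteq> j} \<subseteq> K"
    (is "_ \<longleftrightarrow> ?D \<subseteq> K")
proof
  assume "set \<alpha> \<subseteq> K"
  then show "?D \<subseteq> K"
    using is_subfield_C_diff[OF K] nth_mem by blast
next
  assume D: "?D \<subseteq> K"
  define n where "n = length \<alpha>"
  have "n \<noteq> 0"
    using \<open>\<alpha> \<noteq> []\<close> by (simp add: n_def)
  have diff_K: "\<alpha> ! i - \<alpha> ! j \<in> K" if "i < n" "j < n" for i j
  proof (cases "i = j")
    case True
    then show ?thesis using K by (simp add: is_subfield_C_def)
  next
    case False
    then show ?thesis using D that by (auto simp: n_def)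
  qed
  have "\<alpha> ! i \<in> K" if "i < n" for i
  proof -
    have "(\<Sum>j<n. \<alpha> ! i - \<alpha> ! j) = of_nat n * \<alpha> ! i - sum_list \<alpha>"
      by (simp add: sum_subtractf sum_list_sum_nth n_def atLeast0LessThan)
    then have \<alpha>_i: "\<alpha> ! i = ((\<Sum>j<n. \<alpha> ! i - \<alpha> ! j) + sum_list \<alpha>) * inverse (of_nat n)"
      using \<open>n \<noteq> 0\<close> by (simp add: field_simps)
    have "(\<Sum>j<n. \<alpha> ! i - \<alpha> ! j) \<in> K"
      using diff_K \<open>i < n\<close> by (intro is_subfield_C_sum[OF K]) simp
    moreover have "sum_list \<alpha> \<in> K" "inverse (of_nat n) \<in> K"
      using Rats_subset_subfield_C[OF K] sum_Rats by auto
    ultimately have "((\<Sum>j<n. \<alpha> ! i - \<alpha> ! j) + sum_list \<alpha>) * inverse (of_nat n) \<in> K"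
      by (intro is_subfield_C_mult[OF K] is_subfield_C_add[OF K])
    then show ?thesis
      by (simp only: \<alpha>_i[symmetric])
  qed
  then show "set \<alpha> \<subseteq> K"
    by (auto simp: in_set_conv_nth n_def)
qed

lemma poly_prod_linear_factors:
  "poly (\<Prod>a\<leftarrow>\<alpha>. [:-a, 1:]) z = (\<Prod>a\<leftarrow>\<alpha>. z - a)"
  for z :: "'a::comm_ring_1"
  by (induction \<alpha>) (simp_all add: algebra_simps)

lemma roots_smult_prod_linear_factors:
  "c \<noteq> 0 \<Longrightarrow> {z. poly (smult c (\<Prod>a\<leftarrow>\<alpha>. [:-a, 1:])) z = 0} = set \<alpha>"
  for c :: "'a::idom"
  by (auto simp: poly_prod_linear_factors prod_list_zero_iff)

lemma roots_smult_prod_difference_factors: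
  fixes \<alpha> :: "'a::idom list"
  assumes "c \<noteq> 0"
  shows "{z. poly (smult c (\<Prod>i<length \<alpha>. \<Prod>j\<in>{j. j < length \<alpha> \<and> j \<noteq> i}.
              [:- (\<alpha> ! i - \<alpha> ! j), 1:])) z = 0}
    = {\<alpha> ! i - \<alpha> ! j |i j. i < length \<alpha> \<and> j < length \<alpha> \<and> i \<noteq> j}"
proof -
  have root: "poly [:b - a, 1:] z = 0 \<longleftrightarrow> z = a - b" for a b z :: 'a
    by (auto simp: algebra_simps)
  have roots_iff: "poly (smult c (\<Prod>i<length \<alpha>. \<Prod>j\<in>{j. j < length \<alpha> \<and> j \<noteq> i}.
              [:- (\<alpha> ! i - \<alpha> ! j), 1:])) z = 0 \<longleftrightarrow>
        (\<exists>i\<in>{..<length \<alpha>}. \<exists>j<length \<alpha>. j \<noteq> i \<and> z = \<alpha> ! i - \<alpha> ! j)" for z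
    using assms by (simp add: poly_prod prod_zero_iff root del: poly_pCons)
  show ?thesis
    unfolding set_eq_iff mem_Collect_eq roots_iff by auto (metis lessThan_iff)
qed

theorem lemma2p1:
  fixes f :: "int poly" and \<alpha> :: "complex list"
  assumes "degree f \<ge> 1"
    and "map_poly of_int f = smult (of_int (lead_coeff f)) (\<Prod>a\<leftarrow>\<alpha>. [:- a, 1:])"
  shows "galois_group_C (map_poly of_int f) \<cong>
         galois_group_C (smult (of_int (lead_coeff f) ^ (2 * length \<alpha> - 2))
            (\<Prod>i<length \<alpha>. \<Prod>j\<in>{j. j < length \<alpha> \<and> j \<noteq> i}. [:- (\<alpha> ! i - \<alpha> ! j), 1:]))"
  (is "galois_group_C ?p \<cong> galois_group_C ?q")
proof -
  let ?lc = "of_int (lead_coeff f) :: complex"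
  have "?lc \<noteq> 0"
    using assms(1) by auto
  have "\<alpha> \<noteq> []"
  proof
    assume "\<alpha> = []"
    then have "degree ?p = 0"
      using assms(2) by simp
    with assms(1) show False
      by (simp add: degree_map_poly)
  qed
  have "sum_list \<alpha> \<in> \<rat>"
    using assms(2) \<open>\<alpha> \<noteq> []\<close> \<open>?lc \<noteq> 0\<close> by (rule sum_list_roots_Rats)
  have roots_f: "{z. poly ?p z = 0} = set \<alpha>"
    unfolding assms(2) using \<open>?lc \<noteq> 0\<close> by (rule roots_smult_prod_linear_factors)
  have roots_f_tilde:
    "{z. poly ?q z = 0} = {\<alpha> ! i - \<alpha> ! j |i j. i < length \<alpha> \<and> j < length \<alpha> \<and> i \<noteq> j}"
    using \<open>?lc \<noteq> 0\<close> by (intro roots_smult_prod_difference_factors power_not_zero)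
  have "galois_group_C ?p = galois_group_C ?q"
    by (intro galois_group_C_eqI, unfold roots_f roots_f_tilde)
       (rule subfield_C_contains_list_iff_differences[OF _ \<open>\<alpha> \<noteq> []\<close> \<open>sum_list \<alpha> \<in> \<rat>\<close>])
  then show ?thesis
    by simp
qed

end
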